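(* For each $\eta\in(0,\eta_4)$ and each integer $j\ge1$, we have $\{z_k:k\ge j\}\subset D(0,|z_j|)$ and the broken segment $z_0z_1\cdots z_{j-1}$ is contained in $\mathbb{C}\setminus D(0,|z_j|)$.
   Context: For $\eta\in(0,\pi/3)$ let $a=\frac{e^{-i\eta}}{2\cos\eta}$, $c=\frac{1}{1-|a|^4}$, $z_k=ca^{k+1}$ for $k\ge0$. Let $\Phi_4(\eta)=(1-|a|^4)\sin3\eta-|a|^3\sin2\eta+|a|^4\sin\eta$; it has a unique zero in $(\pi/4,\pi/3)$, denoted $\eta_4$. $D(0,r)$ is the closed disk of radius $r$ centered at $0$; $v_0v_1\cdots v_n$ denotes the union of the segments $v_{i-1}v_i$, $i=1,\dots,n$ (for $j=1$ it is the single point $z_0$). *)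

theory Defs
  imports "HOL-Analysis.Analysis"
begin

definition a_par :: "real \<Rightarrow> complex" where
  "a_par \<eta> = cis (- \<eta>) / complex_of_real (2 * cos \<eta>)"

definition c_par :: "real \<Rightarrow> real" where
  "c_par \<eta> = 1 / (1 - cmod (a_par \<eta>) ^ 4)"

definition zk :: "real \<Rightarrow> nat \<Rightarrow> complex" where
  "zk \<eta> k = complex_of_real (c_par \<eta>) * a_par \<eta> ^ (k + 1)"

definition Phi4 :: "real \<Rightarrow> real" where
  "Phi4 \<eta> = (1 - cmod (a_par \<eta>) ^ 4) * sin (3 * \<eta>)
              - cmod (a_par \<eta>) ^ 3 * sin (2 * \<eta>) + cmod (a_par \<eta>) ^ 4 * sin \<eta>"

definition eta4 :: real where
  "eta4 = (THE \<eta>. pi / 4 < \<eta> \<and> \<eta> < pi / 3 \<and> Phi4 \<eta> = 0)"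

definition broken_seg :: "real \<Rightarrow> nat \<Rightarrow> complex set" where
  "broken_seg \<eta> j = {zk \<eta> 0} \<union> (\<Union>i\<in>{1..<j}. closed_segment (zk \<eta> (i - 1)) (zk \<eta> i))"

end

theory Submission
  imports Defs
begin

(* Write r = |a| = 1 / (2 cos \<eta>), so |z_k| = c r^(k+1) decreases in k.  The segment
   z_(m-1) z_m is c a^m [1, a]; since Re a = 1/2, the point (1 - t) + t a of [1, a] has
   squared modulus 1 - t + t^2 r^2, which exceeds r^4 on [0, 1] as soon as r^4 <= 1/2.
   Hence that segment avoids the disk of radius c r^(m+2) >= |z_j| whenever m < j.
   Finally Phi4 = sin \<eta> (1 - r^2) (1 - 2 r^4) / r^2 and r increases with \<eta>, so \<eta>4 is
   exactly the angle where r^4 = 1/2, and r^4 < 1/2 for \<eta> < \<eta>4. *)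

lemma norm_gt_on_segment_one:
  fixes a w :: complex
  assumes Re_a: "Re a = 1 / 2" and small: "cmod a ^ 4 \<le> 1 / 2" and w: "w \<in> closed_segment 1 a"
  shows "cmod a ^ 2 < cmod w"
proof -
  obtain t where t: "0 \<le> t" "t \<le> 1" and w_eq: "w = (1 - t) *\<^sub>R 1 + t *\<^sub>R a"
    using w in_segment(1) by blast
  define R where "R = cmod a ^ 2"
  have R_eq: "R = 1 / 4 + Im a ^ 2"
    unfolding R_def cmod_power2 Re_a by (simp add: power_divide)
  have Re_w: "Re w = 1 - t / 2" and Im_w: "Im w = t * Im a"
    by (simp_all add: w_eq Re_a)
  have norm_w: "cmod w ^ 2 = 1 - t + t^2 * R"
    unfolding cmod_power2 R_eq Re_w Im_w by (simp add: power2_eq_square field_simps)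
  have R_pos: "0 < R"
    by (simp add: R_eq add_pos_nonneg)
  have R_sq: "R ^ 2 \<le> 1 / 2"
    using small by (simp add: R_def flip: power_mult)
  have R_lt_1: "R < 1"
  proof (rule ccontr)
    assume "\<not> R < 1"
    then have "1 \<le> R ^ 2" by simp
    with R_sq show False by simp
  qed
  have "1 - t + t^2 * R - R^2 = (1 - t) * (1 - 2 * R^2) + R^2 * (1 - t)^2 + t^2 * R * (1 - R)"
    by (simp add: power2_eq_square algebra_simps)
  moreover have "0 \<le> (1 - t) * (1 - 2 * R^2)"
    using t R_sq by simp
  moreover have "0 < R^2 * (1 - t)^2 + t^2 * R * (1 - R)"
    using R_pos R_lt_1 t by (cases "t = 0") (auto intro!: add_pos_nonneg add_nonneg_pos)
  ultimately have "R^2 < cmod w ^ 2"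
    using norm_w by linarith
  then show ?thesis
    unfolding R_def by (rule power_less_imp_less_base) simp
qed

lemma norm_geometric_segment_gt:
  fixes a c x :: complex
  assumes seg: "\<forall>w\<in>closed_segment 1 a. cmod a ^ 2 < cmod w"
    and "c \<noteq> 0" and "m < j" and x: "x \<in> closed_segment (c * a ^ m) (c * a ^ (m + 1))"
  shows "cmod (c * a ^ (j + 1)) < cmod x"
proof -
  have "cmod a ^ 2 < cmod a"
    using seg by auto \<comment> \<open>take \<open>w = a\<close>\<close>
  then have a_pos: "0 < cmod a" and a_lt_1: "cmod a < 1"
    by (auto simp: power2_eq_square mult_less_cancel_right2)
  have "linear ((*) (c * a ^ m))"
    by (simp add: bounded_linear_mult_right bounded_linear.linear)
  then obtain w where w: "w \<in> closed_segment 1 a" and x_eq: "x = c * a ^ m * w"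
    using closed_segment_linear_image[of "(*) (c * a ^ m)" 1 a] x by (auto simp: mult_ac)
  have "cmod (c * a ^ (j + 1)) = cmod c * cmod a ^ (j + 1)"
    by (simp add: norm_mult norm_power)
  also have "\<dots> \<le> cmod c * (cmod a ^ m * cmod a ^ 2)"
  proof -
    have "cmod a ^ (j + 1) \<le> cmod a ^ (m + 2)"
      using \<open>m < j\<close> a_lt_1 by (intro power_decreasing) auto
    from mult_left_mono[OF this norm_ge_zero[of c]] show ?thesis
      by (simp add: power_add power2_eq_square mult_ac)
  qed
  also have "\<dots> < cmod c * (cmod a ^ m * cmod w)"
    using seg w \<open>c \<noteq> 0\<close> a_pos by simp
  also have "\<dots> = cmod x"
    by (simp add: x_eq norm_mult norm_power)
  finally show ?thesis .
qed

lemma norm_geometric_antimono: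
  fixes a c :: complex
  assumes "cmod a \<le> 1" and "j \<le> k"
  shows "cmod (c * a ^ k) \<le> cmod (c * a ^ j)"
proof -
  have "cmod a ^ k \<le> cmod a ^ j"
    using assms by (intro power_decreasing) auto
  then show ?thesis
    by (simp add: norm_mult norm_power mult_left_mono)
qed

lemma sin_triple: "sin (3 * x) = sin (x::real) * (4 * cos x ^ 2 - 1)"
proof -
  have "sin (3 * x) = sin (2 * x) * cos x + cos (2 * x) * sin x"
    using sin_add[of "2 * x" x] by (simp add: algebra_simps)
  also have "\<dots> = sin x * (4 * cos x ^ 2 - 1)"
    unfolding sin_double cos_double sin_squared_eq by (simp add: power2_eq_square algebra_simps)
  finally show ?thesis .
qed

lemma norm_a_par: "0 < cos \<eta> \<Longrightarrow> cmod (a_par \<eta>) = 1 / (2 * cos \<eta>)"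
  by (simp add: a_par_def norm_divide)

lemma Re_a_par: "0 < cos \<eta> \<Longrightarrow> Re (a_par \<eta>) = 1 / 2"
  by (simp add: a_par_def Re_divide_of_real)

lemma norm_a_par_less:
  assumes "0 \<le> \<eta>" "\<eta> < \<eta>'" "\<eta>' < pi / 2"
  shows "cmod (a_par \<eta>) < cmod (a_par \<eta>')"
proof -
  have "0 < cos \<eta>'"
    using assms by (intro cos_gt_zero_pi) auto
  moreover have "cos \<eta>' < cos \<eta>"
    using assms by (subst cos_mono_less_eq) auto
  ultimately show ?thesis
    by (simp add: norm_a_par frac_less2)
qed

lemma Phi4_eq:
  assumes "0 < cos \<eta>"
  shows "Phi4 \<eta> = sin \<eta> * (1 - cmod (a_par \<eta>) ^ 2) * (1 - 2 * cmod (a_par \<eta>) ^ 4)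
                    / cmod (a_par \<eta>) ^ 2"
proof -
  define r where "r = cmod (a_par \<eta>)"
  have r_pos: "0 < r" and cos_eq: "cos \<eta> = 1 / (2 * r)"
    using assms by (simp_all add: r_def norm_a_par)
  have "Phi4 \<eta> = (1 - r ^ 4) * sin \<eta> * (4 * cos \<eta> ^ 2 - 1) - r ^ 3 * 2 * sin \<eta> * cos \<eta>
                  + r ^ 4 * sin \<eta>"
    by (simp add: Phi4_def r_def sin_triple sin_double)
  also have "\<dots> = sin \<eta> * (1 - r ^ 2) * (1 - 2 * r ^ 4) / r ^ 2"
    using r_pos by (simp add: cos_eq field_simps power2_eq_square power3_eq_cube power4_eq_xxxx)
  finally show ?thesis
    by (simp add: r_def)
qed

lemma Phi4_eq_0_iff:
  assumes "0 < \<eta>" "\<eta> < pi / 3"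
  shows "Phi4 \<eta> = 0 \<longleftrightarrow> cmod (a_par \<eta>) ^ 4 = 1 / 2"
proof -
  have "cos (pi / 3) < cos \<eta>"
    using assms by (subst cos_mono_less_eq) auto
  then have cos_gt: "1 / 2 < cos \<eta>"
    by (simp add: cos_60)
  then have "0 < cmod (a_par \<eta>)" "cmod (a_par \<eta>) < 1"
    by (simp_all add: norm_a_par)
  then have "cmod (a_par \<eta>) \<noteq> 0" "cmod (a_par \<eta>) ^ 2 \<noteq> 1"
    by (simp_all add: abs_square_less_1 less_imp_neq)
  moreover have "sin \<eta> \<noteq> 0"
    using assms pi_gt3 sin_gt_zero[of \<eta>] by simp
  ultimately show ?thesis
    using cos_gt by (simp add: Phi4_eq mult.commute)
qed

lemma Phi4_unique_zero: "\<exists>!\<eta>. pi / 4 < \<eta> \<and> \<eta> < pi / 3 \<and> Phi4 \<eta> = 0"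
proof (rule ex_ex1I)
  define v :: real where "v = sqrt (sqrt (1 / 8))"
  have "v ^ 4 = (v ^ 2) ^ 2"
    by (simp flip: power_mult)
  then have v_pow4: "v ^ 4 = 1 / 8"
    by (simp add: v_def)
  have v_pos: "0 < v"
    by (simp add: v_def)
  have "(1 / 2) ^ 4 < v ^ 4"
    unfolding v_pow4 by (simp add: power_divide)
  then have v_gt: "1 / 2 < v"
    by (rule power_less_imp_less_base) (use v_pos in simp)
  have "(sqrt 2 / 2) ^ 4 = ((sqrt 2 / 2) ^ 2) ^ (2::nat)"
    by (simp flip: power_mult)
  then have "v ^ 4 < (sqrt 2 / 2) ^ 4"
    by (simp add: v_pow4 power_divide)
  then have v_lt: "v < sqrt 2 / 2"
    by (rule power_less_imp_less_base) simp
  have v_le_1: "v \<le> 1"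
    by (simp add: v_def)
  have cos_arccos_v: "cos (arccos v) = v"
    using v_pos v_le_1 by simp
  have arccos_range: "0 \<le> arccos v" "arccos v \<le> pi"
    using v_pos v_le_1 by (intro arccos_lbound arccos_ubound; simp)+
  show "\<exists>\<eta>. pi / 4 < \<eta> \<and> \<eta> < pi / 3 \<and> Phi4 \<eta> = 0"
  proof (intro exI conjI)
    show "pi / 4 < arccos v"
      using arccos_range v_lt cos_mono_less_eq[of "arccos v" "pi / 4"]
      by (simp add: cos_arccos_v cos_45)
    moreover show "arccos v < pi / 3"
      using arccos_range v_gt cos_mono_less_eq[of "pi / 3" "arccos v"]
      by (simp add: cos_arccos_v cos_60)
    moreover have "cmod (a_par (arccos v)) ^ 4 = 1 / 2"
      using v_pos by (simp add: norm_a_par cos_arccos_v power_divide v_pow4 power_mult_distrib)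
    ultimately show "Phi4 (arccos v) = 0"
      by (simp add: Phi4_eq_0_iff)
  qed
next
  fix \<eta> \<eta>'
  assume "pi / 4 < \<eta> \<and> \<eta> < pi / 3 \<and> Phi4 \<eta> = 0" "pi / 4 < \<eta>' \<and> \<eta>' < pi / 3 \<and> Phi4 \<eta>' = 0"
  then have "0 \<le> \<eta>" "\<eta> < pi / 2" "0 \<le> \<eta>'" "\<eta>' < pi / 2"
    and "cmod (a_par \<eta>) ^ 4 = cmod (a_par \<eta>') ^ 4"
    using pi_gt_zero by (auto simp: Phi4_eq_0_iff)
  then show "\<eta> = \<eta>'"
    using power_strict_mono[OF norm_a_par_less, of _ _ 4]
    by (metis linorder_neqE_linordered_idom norm_ge_zero zero_less_numeral order_less_irrefl)
qed

lemma eta4_bounds: "pi / 4 < eta4" "eta4 < pi / 3"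
  and norm_a_par_eta4: "cmod (a_par eta4) ^ 4 = 1 / 2"
proof -
  have "pi / 4 < eta4 \<and> eta4 < pi / 3 \<and> Phi4 eta4 = 0"
    unfolding eta4_def by (rule theI'[OF Phi4_unique_zero])
  then show "pi / 4 < eta4" "eta4 < pi / 3" "cmod (a_par eta4) ^ 4 = 1 / 2"
    using Phi4_eq_0_iff[of eta4] pi_gt_zero by auto
qed

lemma norm_a_par_pow4_less_half:
  assumes "0 < \<eta>" "\<eta> < eta4"
  shows "cmod (a_par \<eta>) ^ 4 < 1 / 2"
proof -
  have "cmod (a_par \<eta>) < cmod (a_par eta4)"
    using assms eta4_bounds by (intro norm_a_par_less) auto
  then have "cmod (a_par \<eta>) ^ 4 < cmod (a_par eta4) ^ 4"
    by (intro power_strict_mono) auto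
  then show ?thesis
    by (simp add: norm_a_par_eta4)
qed

lemma norm_a_par_sq_less_on_segment:
  assumes "0 < \<eta>" "\<eta> < eta4" "w \<in> closed_segment 1 (a_par \<eta>)"
  shows "cmod (a_par \<eta>) ^ 2 < cmod w"
proof (rule norm_gt_on_segment_one)
  have "0 < cos \<eta>"
    using assms eta4_bounds by (intro cos_gt_zero_pi) auto
  then show "Re (a_par \<eta>) = 1 / 2"
    by (rule Re_a_par)
  show "cmod (a_par \<eta>) ^ 4 \<le> 1 / 2"
    using norm_a_par_pow4_less_half[OF assms(1,2)] by simp
qed (fact assms(3))

lemma broken_seg_subset_segments:
  assumes "1 \<le> j"
  shows "broken_seg \<eta> j \<subseteq>
    (\<Union>m<j. closed_segment (of_real (c_par \<eta>) * a_par \<eta> ^ m) (of_real (c_par \<eta>) * a_par \<eta> ^ (m + 1)))"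
proof
  fix x assume "x \<in> broken_seg \<eta> j"
  then consider "x = zk \<eta> 0" | i where "i \<in> {1..<j}" "x \<in> closed_segment (zk \<eta> (i - 1)) (zk \<eta> i)"
    unfolding broken_seg_def by blast
  then show "x \<in> (\<Union>m<j. closed_segment (of_real (c_par \<eta>) * a_par \<eta> ^ m)
                                           (of_real (c_par \<eta>) * a_par \<eta> ^ (m + 1)))"
  proof cases
    case 1 \<comment> \<open>\<open>z\<^sub>0\<close> is the endpoint of the segment with \<open>m = 0\<close>\<close>
    then show ?thesis
      using assms by (intro UN_I[of 0]) (auto simp: zk_def)
  next
    case (2 i)
    then show ?thesis
      by (intro UN_I[of i]) (auto simp: zk_def)
  qed
qed

theorem lemma5p4:
  fixes \<eta> :: real and j :: nat
  assumes "0 < \<eta>" and "\<eta> < eta4" and "1 \<le> j"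
  shows "{zk \<eta> k | k. k \<ge> j} \<subseteq> cball 0 (cmod (zk \<eta> j))
         \<and> broken_seg \<eta> j \<subseteq> - cball 0 (cmod (zk \<eta> j))"
proof -
  define a where "a = a_par \<eta>"
  define c where "c = complex_of_real (c_par \<eta>)"
  have zk_eq: "zk \<eta> k = c * a ^ (k + 1)" for k
    by (simp add: zk_def a_def c_def)
  have "cmod a ^ 4 < 1 / 2"
    unfolding a_def using assms(1,2) by (rule norm_a_par_pow4_less_half)
  then have "cmod a ^ 4 < 1" and "c_par \<eta> \<noteq> 0"
    by (simp_all add: c_par_def a_def)
  then have "cmod a \<le> 1" and "c \<noteq> 0"
    by (simp_all add: power_less_one_iff c_def)
  have "{zk \<eta> k | k. k \<ge> j} \<subseteq> cball 0 (cmod (zk \<eta> j))"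
  proof
    fix x assume "x \<in> {zk \<eta> k | k. k \<ge> j}"
    then obtain k where "j \<le> k" "x = zk \<eta> k"
      by blast
    then show "x \<in> cball 0 (cmod (zk \<eta> j))"
      using norm_geometric_antimono[OF \<open>cmod a \<le> 1\<close>, of "j + 1" "k + 1" c] by (simp add: zk_eq)
  qed
  moreover have "broken_seg \<eta> j \<subseteq> - cball 0 (cmod (zk \<eta> j))"
  proof
    fix x assume "x \<in> broken_seg \<eta> j"
    then obtain m where "m < j" "x \<in> closed_segment (c * a ^ m) (c * a ^ (m + 1))"
      using broken_seg_subset_segments[OF assms(3)] by (auto simp: a_def c_def)
    moreover have "\<forall>w\<in>closed_segment 1 a. cmod a ^ 2 < cmod w"
      using norm_a_par_sq_less_on_segment[OF assms(1,2)] by (simp add: a_def)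
    ultimately show "x \<in> - cball 0 (cmod (zk \<eta> j))"
      using norm_geometric_segment_gt \<open>c \<noteq> 0\<close> by (fastforce simp: zk_eq)
  qed
  ultimately show ?thesis ..
qed

end
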